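(* Let $1\le k<n$. An $(n,n-k,n)_q$ code of size $n/k$ exists if and only if $k$ divides $n$ and $q\ge n/k$. In particular, when $k\mid n$, $q''_0(1,k,n)=n/k$.
   Context: $\mathbb{Z}_q=\{0,\dots,q-1\}$ (an alphabet); $\mathrm{wt}$ = number of nonzero coordinates; $d$ = Hamming distance; $J_q(n,w)$ = weight-$w$ words of $\mathbb{Z}_q^n$. An $(n,w,d)_q$ code of size $M$ is a subset $C\subseteq J_q(n,w)$ with $|C|=M$ and pairwise distances at least $d$. A Steiner system $S(t,k,n)$ is a pair $(N,B)$, $|N|=n$, $B$ a set of $k$-subsets (blocks) with every $t$-subset in exactly one block (an $S(1,k,n)$ exists iff $k\mid n$). For $t,k,n$ such that an $S(t,k,n)$ exists, $q''_0(t,k,n)$ is the smallest $q$ for which an $(n,n-k,n-t+1)_q$ code of size $\binom{n}{t}/\binom{k}{t}$ exists. *)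

theory Defs
  imports Complex_Main
begin

definition wt :: "nat list \<Rightarrow> nat" where
  "wt x = card {i. i < length x \<and> x ! i \<noteq> 0}"

definition hdist :: "nat list \<Rightarrow> nat list \<Rightarrow> nat" where
  "hdist x y = card {i. i < length x \<and> x ! i \<noteq> y ! i}"

definition J :: "nat \<Rightarrow> nat \<Rightarrow> nat \<Rightarrow> nat list set" where
  "J q n w = {x. length x = n \<and> set x \<subseteq> {0..<q} \<and> wt x = w}"

definition is_code :: "nat \<Rightarrow> nat \<Rightarrow> nat \<Rightarrow> nat \<Rightarrow> nat list set \<Rightarrow> bool" where
  "is_code q n w d C \<longleftrightarrow> C \<subseteq> J q n w \<and>
     (\<forall>x\<in>C. \<forall>y\<in>C. x \<noteq> y \<longrightarrow> d \<le> hdist x y)"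

text \<open>q''_0(t,k,n): least q admitting an (n,n-k,n-t+1)_q code of size C(n,t)/C(k,t)
  (meaningful when an S(t,k,n) exists, so that the division is exact).\<close>
definition q0'' :: "nat \<Rightarrow> nat \<Rightarrow> nat \<Rightarrow> nat" where
  "q0'' t k n = (LEAST q. \<exists>C. is_code q n (n - k) (n - t + 1) C \<and>
                    card C = (n choose t) div (k choose t))"

end

theory Submission
  imports Defs
begin

text \<open>In a code of length \<open>n > 0\<close> and minimum distance \<open>n\<close> any two codewords differ
  in every coordinate, so already the first coordinate embeds the code into the alphabet and
  \<open>|C| \<le> q\<close>. Conversely, for \<open>n = m k\<close> cut the coordinates into \<open>m\<close> blocks of length \<open>k\<close>
  and let codeword \<open>j < m\<close> take the constant value \<open>b - j (mod m)\<close> on block \<open>b\<close>: distinct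
  codewords differ everywhere, and codeword \<open>j\<close> vanishes exactly on block \<open>j\<close>.\<close>

lemma code_full_distance_card_le:
  assumes code: "is_code q n w n C" and "0 < n"
  shows "card C \<le> q"
proof -
  have inj: "inj_on (\<lambda>x. x ! 0) C"
  proof (rule inj_onI, rule ccontr)
    fix x y assume xy: "x \<in> C" "y \<in> C" "x ! 0 = y ! 0" "x \<noteq> y"
    have "length x = n" using code xy(1) by (auto simp: is_code_def J_def)
    then have "{i. i < length x \<and> x ! i \<noteq> y ! i} \<subseteq> {1..<n}"
      using xy(3) by (auto simp: Suc_le_eq) (metis gr0I)
    then have "hdist x y \<le> n - 1"
      unfolding hdist_def by (metis card_atLeastLessThan card_mono finite_atLeastLessThan)
    moreover have "n \<le> hdist x y" using code xy by (auto simp: is_code_def)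
    ultimately show False using \<open>0 < n\<close> by linarith
  qed
  have "(\<lambda>x. x ! 0) ` C \<subseteq> {0..<q}"
    using code \<open>0 < n\<close> by (force simp: is_code_def J_def)
  from card_inj_on_le[OF inj this] show ?thesis by simp
qed

text \<open>The residue of \<open>b - j\<close> modulo \<open>m\<close>; adding \<open>m\<close> first avoids truncated subtraction.\<close>

definition diff_mod :: "nat \<Rightarrow> nat \<Rightarrow> nat \<Rightarrow> nat" where
  "diff_mod m b j = (b + m - j) mod m"

lemma diff_mod_less: "0 < m \<Longrightarrow> diff_mod m b j < m"
  by (simp add: diff_mod_def)

lemma diff_mod_self [simp]: "diff_mod m b b = 0"
  by (simp add: diff_mod_def)

lemma diff_mod_inj:
  assumes "b < m" "j < m" "j' < m" "diff_mod m b j = diff_mod m b j'"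
  shows "j = j'"
proof (rule ccontr)
  have contra: "False" if "j1 < j2" "j2 < m" "diff_mod m b j1 = diff_mod m b j2" for j1 j2
  proof -
    have "m dvd (b + m - j1) - (b + m - j2)"
      using that mod_eq_dvd_iff_nat[of "b + m - j2" "b + m - j1" m]
      by (simp add: diff_mod_def)
    then have "m dvd j2 - j1" using that by (simp add: diff_diff_eq2)
    then show False using that by (auto dest: dvd_imp_le)
  qed
  assume "j \<noteq> j'"
  then show False using assms contra[of j j'] contra[of j' j] by (cases "j < j'") auto
qed

lemma diff_mod_eq_0_iff: "b < m \<Longrightarrow> j < m \<Longrightarrow> diff_mod m b j = 0 \<longleftrightarrow> b = j"
  using diff_mod_inj[of b m j b] by auto

lemma card_div_eq:
  assumes "0 < k" "j < m"
  shows "card {i. i < m * k \<and> i div k = j} = k"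
proof -
  have iff: "i div k = j \<longleftrightarrow> j * k \<le> i \<and> i < Suc j * k" for i
  proof -
    have "i div k = j \<longleftrightarrow> j \<le> i div k \<and> i div k < Suc j" by auto
    then show ?thesis
      using assms(1) by (simp only: less_eq_div_iff_mult_less_eq div_less_iff_less_mult)
  qed
  have bound: "Suc j * k \<le> m * k" using assms(2) by (intro mult_le_mono1) simp
  have "{i. i < m * k \<and> i div k = j} = {j * k..<Suc j * k}"
    unfolding iff using order_less_le_trans[OF _ bound] by auto
  then show ?thesis by simp
qed

definition block_word :: "nat \<Rightarrow> nat \<Rightarrow> nat \<Rightarrow> nat list" where
  "block_word k m j = map (\<lambda>i. diff_mod m (i div k) j) [0..<m * k]"

lemma wt_map_upt: "wt (map f [0..<n]) = card {i. i < n \<and> f i \<noteq> 0}"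
  unfolding wt_def by (auto intro!: arg_cong[where f = card])

lemma hdist_map_upt: "hdist (map f [0..<n]) (map g [0..<n]) = card {i. i < n \<and> f i \<noteq> g i}"
  unfolding hdist_def by (auto intro!: arg_cong[where f = card])

lemma block_code:
  assumes "0 < k" "m \<le> q"
  shows "is_code q (m * k) (m * k - k) (m * k) (block_word k m ` {..<m})"
proof -
  have block_less: "i div k < m" if "i < m * k" for i
    using that by (simp add: less_mult_imp_div_less)
  have wt: "wt (block_word k m j) = m * k - k" if "j < m" for j
  proof -
    have "diff_mod m (i div k) j = 0 \<longleftrightarrow> i div k = j" if "i < m * k" for i
      by (simp add: diff_mod_eq_0_iff block_less that \<open>j < m\<close>)
    then have "{i. i < m * k \<and> diff_mod m (i div k) j \<noteq> 0}
          = {..<m * k} - {i. i < m * k \<and> i div k = j}"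
      by auto
    then show ?thesis
      using card_div_eq[OF assms(1) that]
      by (simp add: block_word_def wt_map_upt card_Diff_subset subset_eq)
  qed
  have dist: "hdist (block_word k m j) (block_word k m j') = m * k"
    if "j < m" "j' < m" "j \<noteq> j'" for j j'
  proof -
    have "{i. i < m * k \<and> diff_mod m (i div k) j \<noteq> diff_mod m (i div k) j'} = {..<m * k}"
      using that diff_mod_inj[OF block_less] by auto
    then show ?thesis by (simp add: block_word_def hdist_map_upt)
  qed
  have set: "set (block_word k m j) \<subseteq> {0..<q}" for j
  proof -
    have "diff_mod m (i div k) j < q" if "i < m * k" for i
    proof -
      have "0 < m" using block_less[OF that] by simp
      then show ?thesis using assms(2) diff_mod_less[of m "i div k" j] by linarith
    qed
    then show ?thesis by (auto simp: block_word_def)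
  qed
  have "length (block_word k m j) = m * k" for j
    by (simp add: block_word_def)
  with set wt dist show ?thesis
    by (auto simp: is_code_def J_def intro!: eq_imp_le[OF dist[symmetric]])
qed

lemma card_block_code:
  assumes "0 < k"
  shows "card (block_word k m ` {..<m}) = m"
proof -
  have "inj_on (block_word k m) {..<m}"
  proof (rule inj_onI)
    fix j j' assume jj': "j \<in> {..<m}" "j' \<in> {..<m}" "block_word k m j = block_word k m j'"
    then have "block_word k m j ! 0 = block_word k m j' ! 0" by simp
    with jj' assms show "j = j'"
      by (auto simp: block_word_def intro: diff_mod_inj[of 0 m])
  qed
  then show ?thesis by (simp add: card_image)
qed

lemma full_distance_code_exists_iff:
  assumes "0 < k" "k dvd n" "0 < n"
  shows "(\<exists>C. is_code q n (n - k) n C \<and> card C = n div k) \<longleftrightarrow> n div k \<le> q"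
proof
  assume "\<exists>C. is_code q n (n - k) n C \<and> card C = n div k"
  then show "n div k \<le> q" using code_full_distance_card_le \<open>0 < n\<close> by metis
next
  assume "n div k \<le> q"
  moreover have "n = n div k * k" using \<open>k dvd n\<close> by simp
  ultimately show "\<exists>C. is_code q n (n - k) n C \<and> card C = n div k"
    using block_code card_block_code \<open>0 < k\<close> by metis
qed

lemma real_eq_divide_iff_dvd:
  fixes c n k :: nat
  assumes "0 < k"
  shows "real c = real n / real k \<longleftrightarrow> k dvd n \<and> c = n div k"
proof
  assume "real c = real n / real k"
  then have "real (c * k) = real n" using assms by (simp add: field_simps)
  then have "c * k = n" by linarith
  then show "k dvd n \<and> c = n div k" using assms by auto
qed (simp add: real_of_nat_div)

theorem mainTheorem15:
  fixes k n q :: nat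
  assumes "1 \<le> k" and "k < n"
  shows "((\<exists>C. is_code q n (n - k) n C \<and> real (card C) = real n / real k)
            \<longleftrightarrow> (k dvd n \<and> real n / real k \<le> real q))
         \<and> (k dvd n \<longrightarrow> q0'' 1 k n = n div k)"
proof -
  have k: "0 < k" and n: "0 < n" using assms by auto
  have "(\<exists>C. is_code q n (n - k) n C \<and> real (card C) = real n / real k)
        \<longleftrightarrow> (k dvd n \<and> n div k \<le> q)"
    using full_distance_code_exists_iff[OF k _ n] by (auto simp: real_eq_divide_iff_dvd[OF k])
  moreover have "n div k \<le> q \<longleftrightarrow> real n / real k \<le> real q" if "k dvd n"
    using that by (simp flip: real_of_nat_div)
  moreover have "q0'' 1 k n = n div k" if "k dvd n"
  proof -
    have "q0'' 1 k n = (LEAST q. n div k \<le> q)"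
      using full_distance_code_exists_iff[OF k that n] n by (simp add: q0''_def)
    then show ?thesis by (simp add: Least_equality)
  qed
  ultimately show ?thesis by blast
qed

end
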